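(* The linear map $\Theta:\mathbf H_o\to\mathbf{FQSym}$ defined on ordered forests by $\Theta(\mathbb F)=\sum_{\sigma\in S_{\mathbb F}}\sigma$ is a morphism of Hopf algebras, homogeneous of degree $0$.
   Context: A rooted forest is a finite graph each of whose components is a tree with a distinguished root; edges are oriented towards the roots, and for distinct vertices $v,w$ we write $v\twoheadrightarrow w$ if there is an oriented path from $v$ to $w$. An ordered forest with $n$ vertices is a rooted forest with a total order on its vertices, identifying the vertex set with $\{1,\dots,n\}$ (isomorphic ordered forests are identified). $\mathbf H_o$ is the $K$-vector space ($K=\mathbb R$ or $\mathbb C$) with basis all ordered forests, including the empty forest $1$, graded by number of vertices, with product $\mathbb F\mathbb G$ = disjoint union where the vertices of $\mathbb F$ (with $k$ vertices) keep labels $1..k$ and vertex $j$ of $\mathbb G$ gets label $k+j$, and coproduct $\Delta(\mathbb F)=\sum_{\vec v\models V(\mathbb F)}\mathrm{Roo}_{\vec v}\mathbb F\otimes\mathrm{Lea}_{\vec v}\mathbb F$, where an admissible cut $\vec v$ is a (possibly empty) set of vertices no two of which satisfy $v\twoheadrightarrow w$, $\mathrm{Lea}_{\vec v}\mathbb F$ is the subforest on $\vec v\cup\{w:\exists v\in\vec v, w\twoheadrightarrow v\}$, $\mathrm{Roo}_{\vec v}\mathbb F$ is the subforest on the remaining vertices, both ordered by restriction. $\Sigma_n$ is the symmetric group with $(\sigma\circ\tau)(i)=\sigma(\tau(i))$; for $\sigma\in\Sigma_k,\tau\in\Sigma_l$, $(\sigma\otimes\tau)(i)=\sigma(i)$ ($i\le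 k$), $=k+\tau(i-k)$ ($i>k$). $Sh(k,l)=\{\zeta\in\Sigma_{k+l}:\zeta^{-1}(1)<\dots<\zeta^{-1}(k),\ \zeta^{-1}(k+1)<\dots<\zeta^{-1}(k+l)\}$. $\mathbf{FQSym}$ is the graded vector space with basis $\bigsqcup_{n\ge0}\Sigma_n$ (degree $n$ for $\Sigma_n$; the element of $\Sigma_0$ is the unit $1$), product $\sigma\cdot\tau=\sum_{\epsilon\in Sh(k,l)}(\sigma\otimes\tau)\circ\epsilon$ for $\sigma\in\Sigma_k,\tau\in\Sigma_l$, and coproduct $\Delta(\sigma)=\sum_{k=0}^n\sigma_1^{(k)}\otimes\sigma_2^{(k)}$ for $\sigma\in\Sigma_n$, where $\sigma_1^{(k)}$, $\sigma_2^{(k)}$ are the standardizations of the words $(\sigma(1),\dots,\sigma(k))$ and $(\sigma(k+1),\dots,\sigma(n))$ (standardization replaces the letters by $1,2,\dots$ preserving their relative order); equivalently $\sigma=\zeta^{-1}\circ(\sigma_1^{(k)}\otimes\sigma_2^{(k)})$ with $\zeta\in Sh(k,n-k)$. For an ordered forest $\mathbb F$ with $n$ vertices, $S_{\mathbb F}$ is the set of $\sigma\in\Sigma_n$ such that $i\twoheadrightarrow j$ implies $\sigma^{-1}(i)>\sigma^{-1}(j)$. *)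

theory Defs
  imports Complex_Main
begin

text \<open>Vertices of an ordered forest with n vertices and letters of a
permutation in Sigma_n are indexed 0..n-1 (instead of 1..n).
An ordered forest with n vertices is encoded by the list of length n whose i-th entry
is the parent of vertex i (None for a root).  Since isomorphic ordered forests are
identified and the vertex set is identified with the ordered set of labels, this list
determines the ordered forest uniquely.
A permutation sigma in Sigma_n is encoded by its word [sigma(0),...,sigma(n-1)].
Vectors of a vector space with basis B over K are finitely supported functions B => K;
the tensor product of two such spaces has basis the pairs of basis elements.\<close>

type_synonym oforest = "nat option list"
type_synonym perm_word = "nat list"

definition edges :: "oforest \<Rightarrow> (nat \<times> nat) set" where
  "edges F = {(i, j). i < length F \<and> F ! i = Some j}"

definition reach :: "oforest \<Rightarrow> nat \<Rightarrow> nat \<Rightarrow> bool" where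
  "reach F v w \<longleftrightarrow> v \<noteq> w \<and> (v, w) \<in> (edges F)\<^sup>+"

definition valid_forest :: "oforest \<Rightarrow> bool" where
  "valid_forest F \<longleftrightarrow>
     (\<forall>i < length F. \<forall>j. F ! i = Some j \<longrightarrow> j < length F) \<and>
     (\<forall>v. (v, v) \<notin> (edges F)\<^sup>+)"

definition forest_prod :: "oforest \<Rightarrow> oforest \<Rightarrow> oforest" where
  "forest_prod F G = F @ map (map_option (\<lambda>j. j + length F)) G"

definition admissible_cut :: "oforest \<Rightarrow> nat set \<Rightarrow> bool" where
  "admissible_cut F C \<longleftrightarrow> C \<subseteq> {0..<length F} \<and> (\<forall>v\<in>C. \<forall>w\<in>C. \<not> reach F v w)"

definition lea_set :: "oforest \<Rightarrow> nat set \<Rightarrow> nat set" where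
  "lea_set F C = C \<union> {w. \<exists>v\<in>C. reach F w v}"

definition roo_set :: "oforest \<Rightarrow> nat set \<Rightarrow> nat set" where
  "roo_set F C = {0..<length F} - lea_set F C"

text \<open>new label of vertex w in the subforest on S (order by restriction)\<close>
definition relabel :: "nat set \<Rightarrow> nat \<Rightarrow> nat" where
  "relabel S w = card {u \<in> S. u < w}"

definition subforest :: "oforest \<Rightarrow> nat set \<Rightarrow> oforest" where
  "subforest F S = map (\<lambda>v. case F ! v of
        None \<Rightarrow> None
      | Some w \<Rightarrow> (if w \<in> S then Some (relabel S w) else None)) (sorted_list_of_set S)"

definition Lea :: "oforest \<Rightarrow> nat set \<Rightarrow> oforest" where
  "Lea F C = subforest F (lea_set F C)"

definition Roo :: "oforest \<Rightarrow> nat set \<Rightarrow> oforest" where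
  "Roo F C = subforest F (roo_set F C)"

definition valid_perm :: "perm_word \<Rightarrow> bool" where
  "valid_perm s \<longleftrightarrow> distinct s \<and> set s = {0..<length s}"

definition perm_tensor :: "perm_word \<Rightarrow> perm_word \<Rightarrow> perm_word" where
  "perm_tensor s t = s @ map (\<lambda>x. x + length s) t"

text \<open>composition sigma o tau as a word: i \<mapsto> sigma(tau(i))\<close>
definition perm_comp :: "perm_word \<Rightarrow> perm_word \<Rightarrow> perm_word" where
  "perm_comp s t = map (\<lambda>j. s ! j) t"

definition is_shuffle :: "nat \<Rightarrow> nat \<Rightarrow> perm_word \<Rightarrow> bool" where
  "is_shuffle k l e \<longleftrightarrow> valid_perm e \<and> length e = k + l \<and>
     filter (\<lambda>x. x < k) e = [0..<k] \<and> filter (\<lambda>x. k \<le> x) e = [k..<k+l]"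

definition standardize :: "nat list \<Rightarrow> perm_word" where
  "standardize w = map (\<lambda>x. card {y \<in> set w. y < x}) w"

definition supp :: "('b \<Rightarrow> 'k::zero) \<Rightarrow> 'b set" where
  "supp x = {b. x b \<noteq> 0}"

definition basis_vec :: "'b \<Rightarrow> 'b \<Rightarrow> 'k::{zero,one}" where
  "basis_vec b = (\<lambda>c. if c = b then 1 else 0)"

definition lin :: "('a \<Rightarrow> 'b \<Rightarrow> 'k::comm_ring_1) \<Rightarrow> ('a \<Rightarrow> 'k) \<Rightarrow> ('b \<Rightarrow> 'k)" where
  "lin f x = (\<lambda>c. \<Sum>a\<in>supp x. x a * f a c)"

definition bilin :: "('a \<Rightarrow> 'a \<Rightarrow> 'b \<Rightarrow> 'k::comm_ring_1) \<Rightarrow> ('a \<Rightarrow> 'k) \<Rightarrow> ('a \<Rightarrow> 'k) \<Rightarrow> ('b \<Rightarrow> 'k)" where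
  "bilin m x y = (\<lambda>c. \<Sum>(a, b)\<in>supp x \<times> supp y. x a * y b * m a b c)"

definition tensor_map :: "('a \<Rightarrow> 'b \<Rightarrow> 'k::comm_ring_1) \<Rightarrow> ('a \<Rightarrow> 'b \<Rightarrow> 'k) \<Rightarrow>
    ('a \<times> 'a \<Rightarrow> 'k) \<Rightarrow> ('b \<times> 'b \<Rightarrow> 'k)" where
  "tensor_map f g = lin (\<lambda>(a, a') (b, b'). f a b * g a' b')"

definition Ho_elem :: "(oforest \<Rightarrow> 'k::comm_ring_1) \<Rightarrow> bool" where
  "Ho_elem x \<longleftrightarrow> finite (supp x) \<and> supp x \<subseteq> {F. valid_forest F}"

definition Ho_mult_basis :: "oforest \<Rightarrow> oforest \<Rightarrow> oforest \<Rightarrow> 'k::comm_ring_1" where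
  "Ho_mult_basis F G = basis_vec (forest_prod F G)"

definition Ho_mult :: "(oforest \<Rightarrow> 'k::comm_ring_1) \<Rightarrow> (oforest \<Rightarrow> 'k) \<Rightarrow> (oforest \<Rightarrow> 'k)" where
  "Ho_mult = bilin Ho_mult_basis"

definition Ho_unit :: "oforest \<Rightarrow> 'k::comm_ring_1" where
  "Ho_unit = basis_vec []"

definition Ho_counit :: "(oforest \<Rightarrow> 'k::comm_ring_1) \<Rightarrow> 'k" where
  "Ho_counit x = x []"

definition Ho_coprod_basis :: "oforest \<Rightarrow> oforest \<times> oforest \<Rightarrow> 'k::comm_ring_1" where
  "Ho_coprod_basis F = (\<lambda>(A, B). of_nat (card {C. admissible_cut F C \<and>
       Roo F C = A \<and> Lea F C = B}))"

definition Ho_coprod :: "(oforest \<Rightarrow> 'k::comm_ring_1) \<Rightarrow> (oforest \<times> oforest \<Rightarrow> 'k)" where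
  "Ho_coprod = lin Ho_coprod_basis"

definition FQ_mult_basis :: "perm_word \<Rightarrow> perm_word \<Rightarrow> perm_word \<Rightarrow> 'k::comm_ring_1" where
  "FQ_mult_basis s t = (\<lambda>c. of_nat (card {e. is_shuffle (length s) (length t) e \<and>
       perm_comp (perm_tensor s t) e = c}))"

definition FQ_mult :: "(perm_word \<Rightarrow> 'k::comm_ring_1) \<Rightarrow> (perm_word \<Rightarrow> 'k) \<Rightarrow> (perm_word \<Rightarrow> 'k)" where
  "FQ_mult = bilin FQ_mult_basis"

definition FQ_unit :: "perm_word \<Rightarrow> 'k::comm_ring_1" where
  "FQ_unit = basis_vec []"

definition FQ_counit :: "(perm_word \<Rightarrow> 'k::comm_ring_1) \<Rightarrow> 'k" where
  "FQ_counit x = x []"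

definition FQ_coprod_basis :: "perm_word \<Rightarrow> perm_word \<times> perm_word \<Rightarrow> 'k::comm_ring_1" where
  "FQ_coprod_basis s = (\<lambda>(a, b). of_nat (card {k. k \<le> length s \<and>
       standardize (take k s) = a \<and> standardize (drop k s) = b}))"

definition FQ_coprod :: "(perm_word \<Rightarrow> 'k::comm_ring_1) \<Rightarrow> (perm_word \<times> perm_word \<Rightarrow> 'k)" where
  "FQ_coprod = lin FQ_coprod_basis"

definition S_F :: "oforest \<Rightarrow> perm_word set" where
  "S_F F = {s. valid_perm s \<and> length s = length F \<and>
     (\<forall>i j p q. reach F i j \<longrightarrow> p < length s \<longrightarrow> q < length s \<longrightarrow>
         s ! p = i \<longrightarrow> s ! q = j \<longrightarrow> q < p)}"

definition Theta_basis :: "oforest \<Rightarrow> perm_word \<Rightarrow> 'k::comm_ring_1" where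
  "Theta_basis F = (\<lambda>s. if s \<in> S_F F then 1 else 0)"

definition Theta :: "(oforest \<Rightarrow> 'k::comm_ring_1) \<Rightarrow> (perm_word \<Rightarrow> 'k)" where
  "Theta = lin Theta_basis"

text \<open>Theta is a morphism of Hopf algebras (= of bialgebras: product, unit, coproduct,
counit are preserved; the antipode is then automatically preserved), homogeneous of
degree 0, over the scalar type 'k.\<close>
definition Theta_Hopf_morphism :: "'k::comm_ring_1 itself \<Rightarrow> bool" where
  "Theta_Hopf_morphism _ \<longleftrightarrow>
     (\<forall>x y :: oforest \<Rightarrow> 'k. Ho_elem x \<longrightarrow> Ho_elem y \<longrightarrow>
        Theta (Ho_mult x y) = FQ_mult (Theta x) (Theta y)) \<and>
     Theta (Ho_unit :: oforest \<Rightarrow> 'k) = FQ_unit \<and>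
     (\<forall>x :: oforest \<Rightarrow> 'k. Ho_elem x \<longrightarrow>
        FQ_coprod (Theta x) = tensor_map Theta_basis Theta_basis (Ho_coprod x)) \<and>
     (\<forall>x :: oforest \<Rightarrow> 'k. Ho_elem x \<longrightarrow> FQ_counit (Theta x) = Ho_counit x) \<and>
     (\<forall>(x :: oforest \<Rightarrow> 'k) n. Ho_elem x \<longrightarrow> (\<forall>F\<in>supp x. length F = n) \<longrightarrow>
        (\<forall>s\<in>supp (Theta x). length s = n))"

end

theory Submission
  imports Defs
begin

text \<open>
  Theta maps an ordered forest F to the sum of its linear extensions S_F F, i.e. of the
  permutations listing every vertex after all vertices it reaches.  The proof that Theta
  is a Hopf algebra morphism reduces, by linearity, to two counting identities on basis
  elements, which are the combinatorial heart of the argument: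

  - product: every linear extension of the product forest F G is obtained from exactly one
    triple (s, t, e) of linear extensions s of F, t of G and a shuffle e, because a word on
    the vertices of F G is a linear extension iff its two blocks are
    (card_shuffles_forest_prod);
  - coproduct: cutting a linear extension of F into a prefix and a suffix corresponds to
    choosing an admissible cut C (the suffix letters form the lower set Lea F C) together
    with linear extensions of Roo F C and Lea F C (card_deconcatenations).
\<close>

section \<open>Positions of letters and linear extensions\<close>

fun idx :: "'a list \<Rightarrow> 'a \<Rightarrow> nat" where
  "idx [] x = 0"
| "idx (z # w) x = (if z = x then 0 else Suc (idx w x))"

lemma idx_less: "x \<in> set w \<Longrightarrow> idx w x < length w"
  by (induction w) auto

lemma nth_idx: "x \<in> set w \<Longrightarrow> w ! idx w x = x"
  by (induction w) auto

lemma idx_nth: "distinct w \<Longrightarrow> i < length w \<Longrightarrow> idx w (w ! i) = i"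
  by (induction w arbitrary: i) (auto simp: in_set_conv_nth less_Suc_eq_0_disj)

lemma idx_append: "idx (xs @ ys) x = (if x \<in> set xs then idx xs x else length xs + idx ys x)"
  by (induction xs) auto

lemma idx_map: "inj_on f (set w) \<Longrightarrow> x \<in> set w \<Longrightarrow> idx (map f w) (f x) = idx w x"
  by (induction w) (auto simp: inj_on_def)

lemma map_idx_self: "distinct w \<Longrightarrow> map (idx w) w = [0..<length w]"
  by (rule nth_equalityI) (auto simp: idx_nth)

lemma idx_filter:
  assumes "P x" "P y" "x \<in> set w" "y \<in> set w"
  shows "idx (filter P w) x < idx (filter P w) y \<longleftrightarrow> idx w x < idx w y"
  using assms by (induction w) auto

definition lin_ext :: "oforest \<Rightarrow> nat list \<Rightarrow> bool" where
  "lin_ext F w \<longleftrightarrow> (\<forall>x\<in>set w. \<forall>y\<in>set w. reach F x y \<longrightarrow> idx w y < idx w x)"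

lemma S_F_lin_ext: "S_F F = {s. valid_perm s \<and> length s = length F \<and> lin_ext F s}"
proof -
  have "(\<forall>i j p q. reach F i j \<longrightarrow> p < length s \<longrightarrow> q < length s \<longrightarrow>
         s ! p = i \<longrightarrow> s ! q = j \<longrightarrow> q < p) \<longleftrightarrow> lin_ext F s" if "distinct s" for s
    unfolding lin_ext_def using that idx_less nth_idx idx_nth nth_mem by metis
  then show ?thesis unfolding S_F_def valid_perm_def by blast
qed

lemma lin_ext_cong:
  "(\<And>x y. x \<in> set w \<Longrightarrow> y \<in> set w \<Longrightarrow> reach F x y = reach G x y) \<Longrightarrow> lin_ext F w = lin_ext G w"
  unfolding lin_ext_def by auto

lemma lin_ext_map:
  assumes "inj_on f (set w)"
    and "\<And>x y. x \<in> set w \<Longrightarrow> y \<in> set w \<Longrightarrow> reach G (f x) (f y) = reach F x y"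
  shows "lin_ext G (map f w) = lin_ext F w"
  unfolding lin_ext_def using assms idx_map by fastforce

lemma lin_ext_filter_split:
  assumes "\<And>x y. x \<in> set w \<Longrightarrow> y \<in> set w \<Longrightarrow> reach F x y \<Longrightarrow> P x = P y"
  shows "lin_ext F w \<longleftrightarrow> lin_ext F (filter P w) \<and> lin_ext F (filter (\<lambda>x. \<not> P x) w)"
  unfolding lin_ext_def using assms idx_filter[of P] idx_filter[of "\<lambda>x. \<not> P x"]
  by (smt (verit) mem_Collect_eq set_filter)

lemma lin_ext_append:
  assumes "distinct (xs @ ys)"
  shows "lin_ext F (xs @ ys) \<longleftrightarrow>
    lin_ext F xs \<and> lin_ext F ys \<and> (\<forall>x\<in>set xs. \<forall>y\<in>set ys. \<not> reach F x y)"
  using assms idx_less unfolding lin_ext_def idx_append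
  by (auto simp: disjoint_iff) (fastforce+)

section \<open>Standardization\<close>

abbreviation sl :: "nat set \<Rightarrow> nat list" where "sl S \<equiv> sorted_list_of_set S"

lemma card_less_idx:
  "sorted l \<Longrightarrow> distinct l \<Longrightarrow> x \<in> set l \<Longrightarrow> card {u \<in> set l. u < x} = idx l x"
proof (induction l)
  case (Cons z l)
  show ?case
  proof (cases "z = x")
    case False
    then have "{u \<in> set (z # l). u < x} = insert z {u \<in> set l. u < x}"
      and "z \<notin> set l" using Cons.prems by auto
    then show ?thesis using Cons False by simp
  qed (use Cons.prems in auto)
qed simp

lemma relabel_idx: "finite S \<Longrightarrow> x \<in> S \<Longrightarrow> relabel S x = idx (sl S) x"
  unfolding relabel_def using card_less_idx[of "sl S" x] by simp

lemma relabel_less: "finite S \<Longrightarrow> x \<in> S \<Longrightarrow> relabel S x < card S"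
  using idx_less[of x "sl S"] by (simp add: relabel_idx)

lemma sl_relabel: "finite S \<Longrightarrow> x \<in> S \<Longrightarrow> sl S ! relabel S x = x"
  by (simp add: relabel_idx nth_idx)

lemma sl_nth_in: "finite S \<Longrightarrow> i < card S \<Longrightarrow> sl S ! i \<in> S"
  by (metis length_sorted_list_of_set nth_mem set_sorted_list_of_set)

lemma relabel_sl: "finite S \<Longrightarrow> i < card S \<Longrightarrow> relabel S (sl S ! i) = i"
  by (simp add: relabel_idx sl_nth_in idx_nth)

lemma relabel_inj: "finite S \<Longrightarrow> inj_on (relabel S) S"
  by (metis inj_onI sl_relabel)

lemma relabel_image: "finite S \<Longrightarrow> relabel S ` S = {0..<card S}"
  by (auto simp: relabel_less) (metis image_eqI relabel_sl sl_nth_in)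

lemma standardize_relabel: "standardize w = map (relabel (set w)) w"
  unfolding standardize_def relabel_def by simp

lemma length_standardize: "length (standardize w) = length w"
  unfolding standardize_def by simp

lemma valid_perm_standardize: "distinct w \<Longrightarrow> valid_perm (standardize w)"
  unfolding valid_perm_def standardize_relabel
  using relabel_inj[of "set w"] relabel_image[of "set w"]
  by (simp add: distinct_map distinct_card)

text \<open>The inverse of standardization: the word over S whose standardization is a.\<close>
definition unstd :: "nat set \<Rightarrow> nat list \<Rightarrow> nat list" where
  "unstd S a = map (\<lambda>i. sl S ! i) a"

lemma length_unstd: "length (unstd S a) = length a"
  unfolding unstd_def by simp

lemma unstd_standardize: "distinct w \<Longrightarrow> unstd (set w) (standardize w) = w"
  unfolding unstd_def standardize_relabel by (simp add: map_idI sl_relabel)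

context
  fixes S :: "nat set" and a :: perm_word
  assumes fin: "finite S" and a: "valid_perm a" "length a = card S"
begin

lemma set_unstd: "set (unstd S a) = S"
proof -
  have "set (unstd S a) = (\<lambda>i. sl S ! i) ` {0..<length (sl S)}"
    using fin a unfolding unstd_def valid_perm_def by simp
  also have "\<dots> = S" by (metis fin atLeast0LessThan set_conv_nth image_Collect lessThan_def
        set_sorted_list_of_set)
  finally show ?thesis .
qed

lemma distinct_unstd: "distinct (unstd S a)"
  using a unfolding unstd_def valid_perm_def
  by (auto simp: distinct_map inj_on_def nth_eq_iff_index_eq)

lemma standardize_unstd: "standardize (unstd S a) = a"
  using fin a unfolding standardize_relabel set_unstd unfolding unstd_def valid_perm_def
  by (auto intro!: map_idI simp: relabel_sl)

end

section \<open>Reachability in forests, subforests and products\<close>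

lemma trancl_closed:
  assumes "(u, v) \<in> R\<^sup>+" "u \<in> A" "\<And>a b. (a, b) \<in> R \<Longrightarrow> a \<in> A \<Longrightarrow> b \<in> A"
  shows "v \<in> A"
  using assms(1,2) by (induction rule: trancl_induct) (auto intro: assms(3))

lemma trancl_map_prod_inj:
  assumes inj: "inj_on h A" and R: "R \<subseteq> A \<times> A"
  shows "(map_prod h h ` R)\<^sup>+ = map_prod h h ` (R\<^sup>+)"
proof
  have RA: "R\<^sup>+ \<subseteq> A \<times> A" using R by (metis trancl_subset_Sigma)
  show "(map_prod h h ` R)\<^sup>+ \<subseteq> map_prod h h ` (R\<^sup>+)"
  proof clarify
    fix x y assume "(x, y) \<in> (map_prod h h ` R)\<^sup>+"
    then have "\<exists>a b. (a, b) \<in> R\<^sup>+ \<and> x = h a \<and> y = h b"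
    proof (induction rule: trancl_induct)
      case (step y z)
      then obtain a b b' c where ab: "(a, b) \<in> R\<^sup>+" "x = h a" "y = h b"
        and bc: "(b', c) \<in> R" "y = h b'" "z = h c" by auto
      have "b = b'" using ab bc RA R inj by (auto dest: inj_onD)
      then have "(a, c) \<in> R\<^sup>+" using ab bc by (meson trancl.trancl_into_trancl)
      then show ?case using ab bc by blast
    qed auto
    then show "(x, y) \<in> map_prod h h ` (R\<^sup>+)" by force
  qed
  show "map_prod h h ` (R\<^sup>+) \<subseteq> (map_prod h h ` R)\<^sup>+"
  proof
    fix p assume "p \<in> map_prod h h ` (R\<^sup>+)"
    then obtain a b where p: "p = (h a, h b)" "(a, b) \<in> R\<^sup>+" by auto
    from p(2) have "(h a, h b) \<in> (map_prod h h ` R)\<^sup>+"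
      by (induction rule: trancl_induct) (force intro: trancl_into_trancl)+
    then show "p \<in> (map_prod h h ` R)\<^sup>+" using p by simp
  qed
qed

lemma reach_iff: "valid_forest F \<Longrightarrow> reach F u v = ((u, v) \<in> (edges F)\<^sup>+)"
  unfolding reach_def valid_forest_def by auto

lemma reach_bounded:
  assumes "valid_forest F" "reach F u v"
  shows "u < length F \<and> v < length F"
proof -
  have "(u, v) \<in> (edges F)\<^sup>+" using assms by (simp add: reach_iff)
  then show ?thesis
    by (induction rule: trancl_induct) (use assms(1) in \<open>auto simp: edges_def valid_forest_def\<close>)
qed

lemma reach_trans: "valid_forest F \<Longrightarrow> reach F u v \<Longrightarrow> reach F v w \<Longrightarrow> reach F u w"
  by (simp add: reach_iff)

lemma reach_irrefl: "\<not> reach F u u"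
  unfolding reach_def by simp

lemma length_subforest: "finite S \<Longrightarrow> length (subforest F S) = card S"
  unfolding subforest_def by simp

lemma edges_subforest:
  assumes S: "S \<subseteq> {0..<length F}"
  shows "edges (subforest F S) = map_prod (relabel S) (relabel S) ` (edges F \<inter> S \<times> S)"
proof -
  have fin: "finite S" using S finite_subset by blast
  have nth: "subforest F S ! relabel S v =
      (case F ! v of None \<Rightarrow> None | Some w \<Rightarrow> if w \<in> S then Some (relabel S w) else None)"
    if "v \<in> S" for v
    using that fin relabel_less[OF fin that] by (simp add: subforest_def sl_relabel)
  show ?thesis
  proof (intro set_eqI iffI)
    fix p assume "p \<in> edges (subforest F S)"
    then obtain i j where p: "p = (i, j)" and i: "i < card S" and ij: "subforest F S ! i = Some j"
      unfolding edges_def using length_subforest[OF fin] by auto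
    define v where "v = sl S ! i"
    have v: "v \<in> S" "relabel S v = i" unfolding v_def using fin i sl_nth_in relabel_sl by auto
    then obtain w where "F ! v = Some w" "w \<in> S" "j = relabel S w"
      using ij nth[OF v(1)] by (auto split: option.splits if_splits)
    then show "p \<in> map_prod (relabel S) (relabel S) ` (edges F \<inter> S \<times> S)"
      using p v S unfolding edges_def by force
  next
    fix p assume "p \<in> map_prod (relabel S) (relabel S) ` (edges F \<inter> S \<times> S)"
    then obtain v w where "p = (relabel S v, relabel S w)" "(v, w) \<in> edges F" "v \<in> S" "w \<in> S"
      by auto
    then show "p \<in> edges (subforest F S)"
      using nth relabel_less[OF fin] length_subforest[OF fin] unfolding edges_def by auto
  qed
qed

text \<open>A vertex set is convex if it contains every vertex on a path between two of its
  members. Reachability inside a convex set does not depend on the outside.\<close>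
definition convex :: "oforest \<Rightarrow> nat set \<Rightarrow> bool" where
  "convex F S \<longleftrightarrow> (\<forall>x y u. x \<in> S \<longrightarrow> y \<in> S \<longrightarrow> (x, u) \<in> (edges F)\<^sup>+ \<longrightarrow>
     (u, y) \<in> (edges F)\<^sup>+ \<longrightarrow> u \<in> S)"

lemma trancl_restrict_convex:
  assumes cv: "convex F S" and x: "x \<in> S" and y: "y \<in> S"
  shows "(x, y) \<in> (edges F \<inter> S \<times> S)\<^sup>+ \<longleftrightarrow> (x, y) \<in> (edges F)\<^sup>+"
proof
  assume "(x, y) \<in> (edges F)\<^sup>+"
  then show "(x, y) \<in> (edges F \<inter> S \<times> S)\<^sup>+" using x
  proof (induction rule: converse_trancl_induct)
    case (step a z)
    have "z \<in> S" using cv step y unfolding convex_def by (meson r_into_trancl')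
    then show ?case using step by (meson IntI SigmaI trancl_into_trancl2)
  qed (use y in auto)
qed (metis inf_le1 trancl_mono)

lemma reach_subforest:
  assumes S: "S \<subseteq> {0..<length F}" and cv: "convex F S" and x: "x \<in> S" and y: "y \<in> S"
  shows "reach (subforest F S) (relabel S x) (relabel S y) = reach F x y"
proof -
  have fin: "finite S" using S finite_subset by blast
  have inj: "inj_on (relabel S) S" using relabel_inj fin by simp
  have "(edges (subforest F S))\<^sup>+ = map_prod (relabel S) (relabel S) ` ((edges F \<inter> S \<times> S)\<^sup>+)"
    unfolding edges_subforest[OF S] by (rule trancl_map_prod_inj[OF inj]) auto
  moreover have "(edges F \<inter> S \<times> S)\<^sup>+ \<subseteq> S \<times> S"
    using trancl_subset_Sigma[of "edges F \<inter> S \<times> S" S] by blast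
  ultimately have "(relabel S x, relabel S y) \<in> (edges (subforest F S))\<^sup>+ \<longleftrightarrow>
      (x, y) \<in> (edges F \<inter> S \<times> S)\<^sup>+"
    using inj_on_image_mem_iff[OF map_prod_inj_on[OF inj inj], of "(x, y)"] x y by simp
  moreover have "relabel S x \<noteq> relabel S y \<longleftrightarrow> x \<noteq> y" using inj x y by (auto dest: inj_onD)
  ultimately show ?thesis unfolding reach_def using trancl_restrict_convex[OF cv x y] by simp
qed

lemma convex_up: "(\<And>a b. (a, b) \<in> edges F \<Longrightarrow> a \<in> S \<Longrightarrow> b \<in> S) \<Longrightarrow> convex F S"
  unfolding convex_def using trancl_closed by metis

lemma convex_down: "(\<And>a b. (a, b) \<in> edges F \<Longrightarrow> b \<in> S \<Longrightarrow> a \<in> S) \<Longrightarrow> convex F S"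
  unfolding convex_def using trancl_closed[of _ _ "(edges F)\<inverse>"]
  by (metis converse_iff trancl_converse)

lemma lin_ext_standardize:
  assumes S: "set w \<subseteq> {0..<length F}" and cv: "convex F (set w)"
  shows "lin_ext (subforest F (set w)) (standardize w) = lin_ext F w"
  unfolding standardize_relabel
  using relabel_inj[of "set w"] reach_subforest[OF S cv]
  by (intro lin_ext_map) auto

section \<open>Linear extensions of a product of forests\<close>

definition lo_part :: "nat \<Rightarrow> nat list \<Rightarrow> nat list" where
  "lo_part k c = filter (\<lambda>x. x < k) c"

definition hi_part :: "nat \<Rightarrow> nat list \<Rightarrow> nat list" where
  "hi_part k c = map (\<lambda>x. x - k) (filter (\<lambda>x. k \<le> x) c)"

lemma relabel_interval: "m \<le> w \<Longrightarrow> w \<le> n \<Longrightarrow> relabel {m..<n} w = w - m"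
proof -
  assume "m \<le> w" "w \<le> n"
  then have "{u \<in> {m..<n}. u < w} = {m..<w}" by auto
  then show ?thesis unfolding relabel_def by simp
qed

lemma length_forest_prod: "length (forest_prod F G) = length F + length G"
  unfolding forest_prod_def by simp

lemma forest_prod_nth_lo: "i < length F \<Longrightarrow> forest_prod F G ! i = F ! i"
  unfolding forest_prod_def by (simp add: nth_append)

lemma forest_prod_nth_hi:
  "j < length G \<Longrightarrow> forest_prod F G ! (length F + j) = map_option (\<lambda>x. x + length F) (G ! j)"
  unfolding forest_prod_def by (simp add: nth_append)

context
  fixes F G :: oforest
  assumes vF: "valid_forest F" and vG: "valid_forest G"
begin

lemma edges_forest_prod_lo:
  "(a, b) \<in> edges (forest_prod F G) \<Longrightarrow> a < length F \<Longrightarrow> b < length F"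
  using vF unfolding edges_def valid_forest_def by (auto simp: forest_prod_nth_lo)

lemma edges_forest_prod_hi:
  assumes "(a, b) \<in> edges (forest_prod F G)" "length F \<le> a"
  shows "length F \<le> b \<and> b < length F + length G"
proof -
  have j: "a - length F < length G" and fa: "forest_prod F G ! a = Some b"
    using assms unfolding edges_def length_forest_prod by auto
  then obtain c where "G ! (a - length F) = Some c" "b = c + length F"
    using forest_prod_nth_hi[where F = F, OF j] assms(2) by (cases "G ! (a - length F)") auto
  moreover have "c < length G" using vG j calculation unfolding valid_forest_def by blast
  ultimately show ?thesis by simp
qed

lemma reach_forest_prod_block:
  assumes "reach (forest_prod F G) x y"
  shows "x < length F \<longleftrightarrow> y < length F"
proof -
  have "(x, y) \<in> (edges (forest_prod F G))\<^sup>+" using assms unfolding reach_def by simp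
  then have "x < length F \<Longrightarrow> y < length F" and "length F \<le> x \<Longrightarrow> length F \<le> y"
    using trancl_closed[of x y _ "{..<length F}"] trancl_closed[of x y _ "{length F..}"]
      edges_forest_prod_lo edges_forest_prod_hi by auto
  then show ?thesis by linarith
qed

lemma subforest_forest_prod_lo: "subforest (forest_prod F G) {0..<length F} = F"
proof (rule nth_equalityI)
  fix i assume "i < length (subforest (forest_prod F G) {0..<length F})"
  then have i: "i < length F" by (simp add: length_subforest)
  then show "subforest (forest_prod F G) {0..<length F} ! i = F ! i"
    using vF unfolding subforest_def valid_forest_def
    by (auto simp: forest_prod_nth_lo relabel_interval split: option.splits)
qed (simp add: length_subforest)

lemma subforest_forest_prod_hi:
  "subforest (forest_prod F G) {length F..<length F + length G} = G"
proof (rule nth_equalityI)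
  fix i assume "i < length (subforest (forest_prod F G) {length F..<length F + length G})"
  then have i: "i < length G" by (simp add: length_subforest)
  then show "subforest (forest_prod F G) {length F..<length F + length G} ! i = G ! i"
    using vG unfolding subforest_def valid_forest_def
    by (auto simp: forest_prod_nth_hi relabel_interval split: option.splits)
qed (simp add: length_subforest)

lemma reach_forest_prod_lo:
  assumes "x < length F" "y < length F"
  shows "reach (forest_prod F G) x y = reach F x y"
proof -
  have "convex (forest_prod F G) {0..<length F}"
    by (rule convex_up) (auto dest: edges_forest_prod_lo)
  then show ?thesis
    using reach_subforest[of "{0..<length F}" "forest_prod F G" x y] assms
    by (simp add: subforest_forest_prod_lo length_forest_prod relabel_interval)
qed

lemma reach_forest_prod_hi:
  assumes "x < length G" "y < length G"
  shows "reach (forest_prod F G) (x + length F) (y + length F) = reach G x y"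
proof -
  have "convex (forest_prod F G) {length F..<length F + length G}"
    by (rule convex_up) (auto dest: edges_forest_prod_hi)
  then show ?thesis
    using reach_subforest[of "{length F..<length F + length G}" "forest_prod F G"
        "x + length F" "y + length F"] assms
    by (simp add: subforest_forest_prod_hi length_forest_prod relabel_interval)
qed

lemma lin_ext_forest_prod:
  assumes c: "set c \<subseteq> {0..<length F + length G}"
  shows "lin_ext (forest_prod F G) c \<longleftrightarrow>
    lin_ext F (lo_part (length F) c) \<and> lin_ext G (hi_part (length F) c)"
proof -
  let ?k = "length F" and ?H = "forest_prod F G"
  have "lin_ext ?H (filter (\<lambda>x. x < ?k) c) = lin_ext F (filter (\<lambda>x. x < ?k) c)"
    by (intro lin_ext_cong) (auto simp: reach_forest_prod_lo)
  moreover have "lin_ext ?H (filter (\<lambda>x. ?k \<le> x) c) = lin_ext G (hi_part ?k c)"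
    unfolding hi_part_def
  proof (rule lin_ext_map[symmetric])
    show "inj_on (\<lambda>x. x - ?k) (set (filter (\<lambda>x. ?k \<le> x) c))" by (auto simp: inj_on_def)
    fix x y assume "x \<in> set (filter (\<lambda>x. ?k \<le> x) c)" "y \<in> set (filter (\<lambda>x. ?k \<le> x) c)"
    then have "x - ?k < length G" "y - ?k < length G" "?k \<le> x" "?k \<le> y" using c by auto
    then show "reach G (x - ?k) (y - ?k) = reach ?H x y"
      using reach_forest_prod_hi[of "x - ?k" "y - ?k"] by simp
  qed
  moreover have "lin_ext ?H c \<longleftrightarrow>
      lin_ext ?H (filter (\<lambda>x. x < ?k) c) \<and> lin_ext ?H (filter (\<lambda>x. \<not> x < ?k) c)"
    by (rule lin_ext_filter_split, rule reach_forest_prod_block)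
  moreover have "filter (\<lambda>x. \<not> x < ?k) c = filter (\<lambda>x. ?k \<le> x) c"
    by (simp add: not_less)
  ultimately show ?thesis unfolding lo_part_def by simp
qed

end

section \<open>Shuffle products of permutations\<close>

lemma valid_perm_comp:
  assumes "valid_perm p" "valid_perm e" "length e = length p"
  shows "valid_perm (perm_comp p e) \<and> length (perm_comp p e) = length p"
proof -
  have e: "set e = {0..<length p}" "distinct e" and p: "distinct p" "set p = {0..<length p}"
    using assms unfolding valid_perm_def by auto
  have "inj_on (\<lambda>j. p ! j) (set e)" using p e by (simp add: inj_on_nth)
  moreover have "(\<lambda>j. p ! j) ` set e = set p" using e nth_image[of "length p" p] by simp
  ultimately show ?thesis using assms p e unfolding valid_perm_def perm_comp_def
    by (simp add: distinct_map)
qed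

lemma valid_perm_tensor:
  assumes "valid_perm s" "valid_perm t"
  shows "valid_perm (perm_tensor s t)"
proof -
  have "(\<lambda>x. x + length s) ` {0..<length t} = {length s..<length s + length t}"
    using image_add_atLeastLessThan'[of "length s" 0 "length t"] by (simp add: add.commute)
  moreover have "inj_on (\<lambda>x. x + length s) (set t)" by simp
  ultimately show ?thesis using assms unfolding valid_perm_def perm_tensor_def
    by (auto simp: distinct_map)
qed

lemma shuffle_valid: "is_shuffle k l e \<Longrightarrow> valid_perm e \<and> length e = k + l"
  unfolding is_shuffle_def by simp

context
  fixes s t :: perm_word
  assumes s: "valid_perm s" and t: "valid_perm t"
begin

lemma shuffle_parts:
  assumes e: "is_shuffle (length s) (length t) e"
  shows "lo_part (length s) (perm_comp (perm_tensor s t) e) = s"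
    and "hi_part (length s) (perm_comp (perm_tensor s t) e) = t"
proof -
  let ?k = "length s" and ?l = "length t" and ?p = "perm_tensor s t"
  have set_e: "set e = {0..<?k + ?l}" and set_t: "set t = {0..<?l}"
    using e t unfolding is_shuffle_def valid_perm_def by auto
  have lo: "?p ! j = s ! j \<and> s ! j < ?k" if "j < ?k" for j
    using that s unfolding perm_tensor_def valid_perm_def by (auto simp: nth_append)
  have hi: "?p ! j = t ! (j - ?k) + ?k" if "?k \<le> j" "j < ?k + ?l" for j
    using that unfolding perm_tensor_def by (auto simp: nth_append)
  have block: "?p ! j < ?k \<longleftrightarrow> j < ?k" if "j \<in> set e" for j
    using that lo hi set_e by (cases "j < ?k") auto
  have "lo_part ?k (perm_comp ?p e) = map (\<lambda>j. ?p ! j) (filter (\<lambda>j. ?p ! j < ?k) e)"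
    unfolding lo_part_def perm_comp_def filter_map o_def ..
  also have "\<dots> = map (\<lambda>j. ?p ! j) (filter (\<lambda>j. j < ?k) e)"
    using block by (metis (mono_tags, lifting) filter_cong)
  also have "\<dots> = s" using e lo unfolding is_shuffle_def by (auto intro: nth_equalityI)
  finally show "lo_part ?k (perm_comp ?p e) = s" .
  have "hi_part ?k (perm_comp ?p e) = map (\<lambda>j. ?p ! j - ?k) (filter (\<lambda>j. ?k \<le> ?p ! j) e)"
    unfolding hi_part_def perm_comp_def by (simp add: filter_map o_def)
  also have "\<dots> = map (\<lambda>j. ?p ! j - ?k) (filter (\<lambda>j. ?k \<le> j) e)"
    using block by (metis (mono_tags, lifting) filter_cong not_less)
  also have "\<dots> = t" using e hi unfolding is_shuffle_def by (auto intro: nth_equalityI)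
  finally show "hi_part ?k (perm_comp ?p e) = t" .
qed

lemma shuffle_inj: "inj_on (perm_comp (perm_tensor s t)) {e. is_shuffle (length s) (length t) e}"
proof (rule inj_onI)
  fix e e' assume "e \<in> {e. is_shuffle (length s) (length t) e}"
    "e' \<in> {e. is_shuffle (length s) (length t) e}"
    and eq: "perm_comp (perm_tensor s t) e = perm_comp (perm_tensor s t) e'"
  then have "inj_on (\<lambda>j. perm_tensor s t ! j) (set e \<union> set e')"
    using valid_perm_tensor[OF s t] unfolding is_shuffle_def valid_perm_def perm_tensor_def
    by (simp add: inj_on_nth)
  then show "e = e'" using eq map_inj_on unfolding perm_comp_def by blast
qed

end

context
  fixes c :: perm_word and k l :: nat
  assumes c: "valid_perm c" "length c = k + l"
begin

lemma set_lo_part: "set (lo_part k c) = {0..<k}" and distinct_lo_part: "distinct (lo_part k c)"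
  using c unfolding lo_part_def valid_perm_def by auto

lemma set_filter_hi: "set (filter (\<lambda>x. k \<le> x) c) = {k..<k + l}"
  using c unfolding valid_perm_def by auto

lemma hi_part_shift: "map (\<lambda>x. x + k) (hi_part k c) = filter (\<lambda>x. k \<le> x) c"
  unfolding hi_part_def map_map by (rule map_idI) auto

lemma valid_perm_parts:
  "valid_perm (lo_part k c) \<and> length (lo_part k c) = k \<and>
   valid_perm (hi_part k c) \<and> length (hi_part k c) = l"
proof -
  have lo: "length (lo_part k c) = k"
    using distinct_card[OF distinct_lo_part] set_lo_part by simp
  have "inj_on (\<lambda>x. x - k) (set (filter (\<lambda>x. k \<le> x) c))" by (auto simp: inj_on_def)
  moreover have "(\<lambda>x. x - k) ` {k..<k + l} = {0..<l}"
  proof (intro set_eqI iffI)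
    fix x assume "x \<in> {0..<l}"
    then have "x = (x + k) - k" "x + k \<in> {k..<k + l}" by auto
    then show "x \<in> (\<lambda>x. x - k) ` {k..<k + l}" by blast
  qed auto
  moreover have "distinct (filter (\<lambda>x. k \<le> x) c)" using c unfolding valid_perm_def by simp
  ultimately have "distinct (hi_part k c) \<and> set (hi_part k c) = {0..<l}"
    using set_filter_hi unfolding hi_part_def by (simp add: distinct_map)
  then show ?thesis using lo distinct_lo_part set_lo_part distinct_card
    unfolding valid_perm_def by fastforce
qed

lemma shuffle_exists:
  "\<exists>e. is_shuffle k l e \<and> perm_comp (perm_tensor (lo_part k c) (hi_part k c)) e = c"
proof -
  let ?lo = "lo_part k c" and ?hi = "filter (\<lambda>x. k \<le> x) c"
  define st where "st = ?lo @ ?hi"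
  have st: "perm_tensor ?lo (hi_part k c) = st"
    unfolding perm_tensor_def st_def using valid_perm_parts hi_part_shift by simp
  have d: "distinct c" "distinct ?hi" using c unfolding valid_perm_def by auto
  have set_st: "set st = set c" unfolding st_def lo_part_def by auto
  have len_st: "length st = k + l" unfolding st_def using valid_perm_parts hi_part_shift
    by (metis length_append length_map)
  have dst: "distinct st" unfolding st_def lo_part_def using d by auto
  define e where "e = map (idx st) c"
  have idx_lo: "idx st x = idx ?lo x" if "x < k" "x \<in> set c" for x
    using that unfolding st_def lo_part_def idx_append by simp
  have idx_hi: "idx st x = k + idx ?hi x" if "k \<le> x" for x
    using that valid_perm_parts unfolding st_def lo_part_def idx_append by simp
  have idx_block: "idx st x < k \<longleftrightarrow> x < k" if "x \<in> set c" for x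
  proof (cases "x < k")
    case True
    then have "x \<in> set ?lo" using that unfolding lo_part_def by simp
    then show ?thesis using True idx_lo that idx_less[of x ?lo] valid_perm_parts by simp
  qed (use idx_hi in simp)
  have "filter (\<lambda>j. j < k) e = map (idx st) (filter (\<lambda>x. idx st x < k) c)"
    unfolding e_def by (simp add: filter_map o_def)
  also have "\<dots> = map (idx ?lo) ?lo"
    using idx_block idx_lo unfolding lo_part_def by (auto intro!: filter_cong map_cong)
  also have "\<dots> = [0..<k]" using map_idx_self[OF distinct_lo_part] valid_perm_parts by simp
  finally have e_lo: "filter (\<lambda>j. j < k) e = [0..<k]" .
  have "filter (\<lambda>j. k \<le> j) e = map (idx st) (filter (\<lambda>x. k \<le> idx st x) c)"
    unfolding e_def by (simp add: filter_map o_def)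
  also have "\<dots> = map (\<lambda>x. k + idx ?hi x) ?hi"
    using idx_block idx_hi by (auto simp: not_less[symmetric] intro!: filter_cong map_cong)
  also have "\<dots> = map (\<lambda>i. i + k) (map (idx ?hi) ?hi)" by (simp add: add.commute)
  also have "\<dots> = [k..<k + l]"
    using map_idx_self[OF d(2)] distinct_card[OF d(2)] set_filter_hi map_add_upt[of k l]
    by (simp add: add.commute)
  finally have e_hi: "filter (\<lambda>j. k \<le> j) e = [k..<k + l]" .
  have "set e = set (map (idx st) st)" unfolding e_def using set_st by simp
  also have "\<dots> = {0..<k + l}" using map_idx_self[OF dst] len_st by simp
  finally have "set e = {0..<k + l}" .
  moreover have "inj_on (idx st) (set c)" using set_st by (metis inj_onI nth_idx)
  ultimately have "valid_perm e" "length e = k + l"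
    using d c unfolding e_def valid_perm_def by (auto simp: distinct_map)
  then have "is_shuffle k l e" using e_lo e_hi unfolding is_shuffle_def by simp
  moreover have "perm_comp st e = c"
    unfolding perm_comp_def e_def using set_st by (simp add: map_idI nth_idx)
  ultimately show ?thesis unfolding st by blast
qed

end

section \<open>Counting shuffles of linear extensions\<close>

lemma finite_S_F: "finite (S_F F)"
proof -
  have "S_F F \<subseteq> {s. set s \<subseteq> {0..<length F} \<and> length s = length F}"
    unfolding S_F_def valid_perm_def by auto
  then show ?thesis using finite_lists_length_eq[of "{0..<length F}" "length F"] finite_subset
    by blast
qed

lemma card_shuffle_fiber:
  assumes s: "valid_perm s" and t: "valid_perm t"
  shows "card {e. is_shuffle (length s) (length t) e \<and> perm_comp (perm_tensor s t) e = c} =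
    (if valid_perm c \<and> length c = length s + length t \<and>
        lo_part (length s) c = s \<and> hi_part (length s) c = t then 1 else 0)"
    (is "card ?E = _")
proof (cases "valid_perm c \<and> length c = length s + length t \<and>
        lo_part (length s) c = s \<and> hi_part (length s) c = t")
  case True
  then obtain e where e: "e \<in> ?E" using shuffle_exists[of c "length s" "length t"] by auto
  have "?E = {e}"
    using e shuffle_inj[OF s t] by (auto dest: inj_onD)
  then show ?thesis using True by simp
next
  case False
  have "?E = {}"
  proof (intro equals0I)
    fix e assume e: "e \<in> ?E"
    then have "valid_perm c \<and> length c = length s + length t"
      using valid_perm_comp[OF valid_perm_tensor[OF s t], of e] shuffle_valid[of _ _ e]
      by (auto simp: perm_tensor_def)
    then show False using False e shuffle_parts[OF s t] by auto
  qed
  then show ?thesis using False by (metis card.empty)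
qed

lemma sum_delta2:
  assumes "finite A" "finite B"
  shows "(\<Sum>s\<in>A. \<Sum>t\<in>B. if Q \<and> s = a \<and> t = b then 1 else 0 :: nat) =
    (if Q \<and> a \<in> A \<and> b \<in> B then 1 else 0)"
proof -
  have "(\<Sum>t\<in>B. if Q \<and> s = a \<and> t = b then 1 else 0 :: nat) =
      (if Q \<and> b \<in> B \<and> s = a then 1 else 0)" for s
    by (cases "Q \<and> s = a") (auto simp: assms(2))
  then show ?thesis by (cases "Q \<and> b \<in> B") (auto simp: assms(1))
qed

lemma card_shuffles_forest_prod:
  assumes vF: "valid_forest F" and vG: "valid_forest G"
  shows "(\<Sum>s\<in>S_F F. \<Sum>t\<in>S_F G.
      card {e. is_shuffle (length s) (length t) e \<and> perm_comp (perm_tensor s t) e = c}) =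
    (if c \<in> S_F (forest_prod F G) then 1 else 0)"
proof -
  let ?k = "length F" and ?l = "length G"
  let ?P = "valid_perm c \<and> length c = ?k + ?l"
  have "(\<Sum>s\<in>S_F F. \<Sum>t\<in>S_F G.
      card {e. is_shuffle (length s) (length t) e \<and> perm_comp (perm_tensor s t) e = c}) =
    (\<Sum>s\<in>S_F F. \<Sum>t\<in>S_F G. if ?P \<and> s = lo_part ?k c \<and> t = hi_part ?k c then 1 else 0)"
  proof (intro sum.cong refl)
    fix s t assume "s \<in> S_F F" "t \<in> S_F G"
    then have st: "valid_perm s" "valid_perm t" and "length s = ?k" "length t = ?l"
      by (auto simp: S_F_def)
    then show "card {e. is_shuffle (length s) (length t) e \<and> perm_comp (perm_tensor s t) e = c} =
        (if ?P \<and> s = lo_part ?k c \<and> t = hi_part ?k c then 1 else 0)"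
      unfolding card_shuffle_fiber[OF st] by auto
  qed
  also have "\<dots> = (if ?P \<and> lo_part ?k c \<in> S_F F \<and> hi_part ?k c \<in> S_F G then 1 else 0)"
    by (rule sum_delta2[OF finite_S_F finite_S_F])
  also have "?P \<and> lo_part ?k c \<in> S_F F \<and> hi_part ?k c \<in> S_F G \<longleftrightarrow>
      ?P \<and> lin_ext F (lo_part ?k c) \<and> lin_ext G (hi_part ?k c)"
    using valid_perm_parts[of c ?k ?l] by (auto simp: S_F_lin_ext)
  also have "\<dots> \<longleftrightarrow> ?P \<and> lin_ext (forest_prod F G) c"
    using lin_ext_forest_prod[OF vF vG, of c] unfolding valid_perm_def by auto
  also have "\<dots> \<longleftrightarrow> c \<in> S_F (forest_prod F G)"
    by (auto simp: S_F_lin_ext length_forest_prod)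
  finally show ?thesis .
qed

section \<open>Linear extensions and admissible cuts\<close>

text \<open>A lower set of F is a set of vertices closed under going against the edges;
  the leaf part of an admissible cut is a lower set, and every lower set arises from the
  unique cut formed by its maximal elements.\<close>
definition lower :: "oforest \<Rightarrow> nat set \<Rightarrow> bool" where
  "lower F D \<longleftrightarrow> D \<subseteq> {0..<length F} \<and> (\<forall>u v. v \<in> D \<longrightarrow> reach F u v \<longrightarrow> u \<in> D)"

definition tops :: "oforest \<Rightarrow> nat set \<Rightarrow> nat set" where
  "tops F D = {v \<in> D. \<forall>w\<in>D. \<not> reach F v w}"

context
  fixes F :: oforest
  assumes vF: "valid_forest F"
begin

lemma lower_lea_set: "admissible_cut F C \<Longrightarrow> lower F (lea_set F C)"
  unfolding lower_def lea_set_def admissible_cut_def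
  using reach_bounded[OF vF] reach_trans[OF vF] by fastforce

lemma tops_lea_set: "admissible_cut F C \<Longrightarrow> tops F (lea_set F C) = C"
  unfolding tops_def lea_set_def admissible_cut_def
  using reach_trans[OF vF] by blast

lemma exists_top:
  assumes fin: "finite D" and v: "v \<in> D"
  shows "\<exists>t\<in>tops F D. t = v \<or> reach F v t"
  using v
proof (induction "card {u\<in>D. reach F v u}" arbitrary: v rule: less_induct)
  case less
  show ?case
  proof (cases "v \<in> tops F D")
    case False
    then obtain w where w: "w \<in> D" "reach F v w" using less.prems unfolding tops_def by blast
    have "{u\<in>D. reach F w u} \<subset> {u\<in>D. reach F v u}"
      using w reach_trans[OF vF] reach_irrefl by blast
    then have "card {u\<in>D. reach F w u} < card {u\<in>D. reach F v u}"
      using fin by (intro psubset_card_mono) auto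
    then obtain t where "t \<in> tops F D" "t = w \<or> reach F w t" using less.hyps w(1) by blast
    then show ?thesis using w reach_trans[OF vF] by blast
  qed blast
qed

lemma tops_admissible:
  assumes "lower F D"
  shows "admissible_cut F (tops F D) \<and> lea_set F (tops F D) = D"
proof -
  have D: "D \<subseteq> {0..<length F}" using assms unfolding lower_def by simp
  then have "finite D" using finite_subset by blast
  then have "D \<subseteq> lea_set F (tops F D)" using exists_top unfolding lea_set_def by blast
  moreover have "lea_set F (tops F D) \<subseteq> D"
    using assms unfolding lea_set_def tops_def lower_def by blast
  moreover have "admissible_cut F (tops F D)" unfolding admissible_cut_def tops_def using D by blast
  ultimately show ?thesis by blast
qed

lemma bij_cuts_lower_sets: "bij_betw (lea_set F) {C. admissible_cut F C} {D. lower F D}"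
proof (rule bij_betw_byWitness[where f' = "tops F"])
  show "\<forall>C\<in>{C. admissible_cut F C}. tops F (lea_set F C) = C" by (simp add: tops_lea_set)
  show "\<forall>D\<in>{D. lower F D}. lea_set F (tops F D) = D" by (simp add: tops_admissible)
  show "lea_set F ` {C. admissible_cut F C} \<subseteq> {D. lower F D}" by (auto simp: lower_lea_set)
  show "tops F ` {D. lower F D} \<subseteq> {C. admissible_cut F C}" by (auto simp: tops_admissible)
qed

lemma convex_lower: "lower F D \<Longrightarrow> convex F D"
  by (rule convex_down) (auto simp: lower_def reach_iff[OF vF])

lemma convex_upper: "lower F D \<Longrightarrow> convex F ({0..<length F} - D)"
proof (rule convex_up)
  fix a b assume D: "lower F D" and ab: "(a, b) \<in> edges F" and a: "a \<in> {0..<length F} - D"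
  have "reach F a b" using ab by (simp add: reach_iff[OF vF] r_into_trancl')
  then show "b \<in> {0..<length F} - D" using D a reach_bounded[OF vF] unfolding lower_def by auto
qed

end

lemma in_set_drop_idx: "distinct s \<Longrightarrow> x \<in> set (drop k s) \<longleftrightarrow> x \<in> set s \<and> k \<le> idx s x"
proof
  assume d: "distinct s" and x: "x \<in> set (drop k s)"
  then obtain i where "i < length (drop k s)" "drop k s ! i = x" by (auto simp: in_set_conv_nth)
  then have "k + i < length s" "s ! (k + i) = x" by auto
  then show "x \<in> set s \<and> k \<le> idx s x" using idx_nth[OF d] by (metis le_add1 nth_mem)
next
  assume x: "x \<in> set s \<and> k \<le> idx s x"
  then have "idx s x < length s" "s ! idx s x = x" using idx_less nth_idx by auto
  then have "drop k s ! (idx s x - k) = x" "idx s x - k < length (drop k s)" using x by auto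
  then show "x \<in> set (drop k s)" by (metis nth_mem)
qed

lemma standardize_in_S_F_subforest:
  assumes "distinct w" "set w \<subseteq> {0..<length F}" "convex F (set w)"
  shows "standardize w \<in> S_F (subforest F (set w)) \<longleftrightarrow> lin_ext F w"
  using assms lin_ext_standardize[OF assms(2,3)] valid_perm_standardize[OF assms(1)]
  by (simp add: S_F_lin_ext length_standardize length_subforest distinct_card)

context
  fixes F :: oforest
  assumes vF: "valid_forest F"
begin

lemma lower_drop:
  assumes s: "s \<in> S_F F"
  shows "lower F (set (drop k s))"
  unfolding lower_def
proof (intro conjI allI impI)
  have ds: "distinct s" and ss: "set s = {0..<length F}"
    using s unfolding S_F_def valid_perm_def by auto
  then show "set (drop k s) \<subseteq> {0..<length F}" by (metis set_drop_subset)
  fix u v assume v: "v \<in> set (drop k s)" and r: "reach F u v"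
  have u: "u \<in> set s" using reach_bounded[OF vF r] ss by simp
  have "v \<in> set s" "k \<le> idx s v" using v in_set_drop_idx[OF ds] by auto
  moreover have "idx s v < idx s u" using s u r calculation unfolding S_F_lin_ext lin_ext_def by blast
  ultimately show "u \<in> set (drop k s)" using in_set_drop_idx[OF ds] u by simp
qed

lemma split_in_S_F:
  assumes s: "s \<in> S_F F"
  shows "standardize (take k s) \<in> S_F (subforest F ({0..<length F} - set (drop k s)))"
    and "standardize (drop k s) \<in> S_F (subforest F (set (drop k s)))"
proof -
  have ds: "distinct (take k s @ drop k s)" and ss: "set (take k s @ drop k s) = {0..<length F}"
    and lin: "lin_ext F (take k s @ drop k s)"
    using s unfolding S_F_lin_ext valid_perm_def by auto
  have low: "lower F (set (drop k s))" by (rule lower_drop[OF s])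
  have take: "set (take k s) = {0..<length F} - set (drop k s)"
    using ds ss by (auto simp del: append_take_drop_id)
  show "standardize (take k s) \<in> S_F (subforest F ({0..<length F} - set (drop k s)))"
    using standardize_in_S_F_subforest[of "take k s" F] convex_upper[OF vF low] ds ss lin
    unfolding take lin_ext_append[OF ds] by auto
  show "standardize (drop k s) \<in> S_F (subforest F (set (drop k s)))"
    using standardize_in_S_F_subforest[of "drop k s" F] convex_lower[OF vF low] ds ss lin
      set_drop_subset[of k s]
    unfolding lin_ext_append[OF ds] by auto
qed

lemma glue_in_S_F:
  assumes low: "lower F D"
    and a: "a \<in> S_F (subforest F ({0..<length F} - D))" and b: "b \<in> S_F (subforest F D)"
  shows "unstd ({0..<length F} - D) a @ unstd D b \<in> S_F F"
proof -
  let ?U = "{0..<length F} - D"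
  have D: "D \<subseteq> {0..<length F}" "finite D" using low finite_subset unfolding lower_def by auto
  have a': "valid_perm a" "length a = card ?U" and b': "valid_perm b" "length b = card D"
    using a b D unfolding S_F_def by (auto simp: length_subforest)
  define xs where "xs = unstd ?U a"
  define ys where "ys = unstd D b"
  have xs: "set xs = ?U" "distinct xs" "standardize xs = a"
    unfolding xs_def using set_unstd distinct_unstd standardize_unstd a' by auto
  have ys: "set ys = D" "distinct ys" "standardize ys = b"
    unfolding ys_def using set_unstd distinct_unstd standardize_unstd b' D by auto
  have lx: "lin_ext F xs"
    using standardize_in_S_F_subforest[of xs F] xs a convex_upper[OF vF low] by auto
  have ly: "lin_ext F ys"
    using standardize_in_S_F_subforest[of ys F] ys b convex_lower[OF vF low] D by auto
  have d: "distinct (xs @ ys)" using xs ys by auto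
  have "\<forall>x\<in>set xs. \<forall>y\<in>set ys. \<not> reach F x y" using xs ys low unfolding lower_def by blast
  then have "lin_ext F (xs @ ys)" using lin_ext_append[OF d] lx ly by simp
  moreover have "set (xs @ ys) = {0..<length F}" using xs ys D by auto
  moreover then have "length (xs @ ys) = length F" using distinct_card[OF d] by simp
  ultimately show ?thesis
    unfolding S_F_lin_ext valid_perm_def xs_def[symmetric] ys_def[symmetric] using d by simp
qed

end

lemma unstd_split:
  assumes "distinct s" "set s = U"
  shows "unstd (U - set (drop k s)) (standardize (take k s)) @
    unstd (set (drop k s)) (standardize (drop k s)) = s"
proof -
  have "distinct (take k s @ drop k s)" "set (take k s @ drop k s) = U" using assms by simp_all
  then have "U - set (drop k s) = set (take k s)" "distinct (take k s)" "distinct (drop k s)"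
    by (auto simp del: append_take_drop_id)
  then show ?thesis by (simp add: unstd_standardize)
qed

lemma card_cut_positions:
  fixes p q :: perm_word
  shows "card {k. k \<le> length s \<and> standardize (take k s) = p \<and> standardize (drop k s) = q} =
      (if length p \<le> length s \<and> standardize (take (length p) s) = p \<and>
       standardize (drop (length p) s) = q then 1 else 0)"
    (is "card {k. ?A k} = (if ?A (length p) then 1 else 0)")
proof -
  have len: "k = length p" if "?A k" for k
  proof -
    have k: "k \<le> length s" and P: "standardize (take k s) = p" using that by auto
    show ?thesis unfolding P[symmetric] length_standardize using k by simp
  qed
  have "{k. ?A k} = {k. k = length p \<and> ?A k}"
  proof (rule Collect_cong, rule iffI)
    fix k assume A: "?A k"
    show "k = length p \<and> ?A k" using len[OF A] A by (rule conjI)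
  qed (rule conjunct2)
  also have "\<dots> = (if ?A (length p) then {length p} else {})" by (rule Collect_conv_if)
  finally show ?thesis by simp
qed

context
  fixes F :: oforest
  assumes vF: "valid_forest F"
begin

text \<open>Linear extensions of F whose prefix and suffix standardize to a and b correspond
  bijectively, via the set of suffix letters, to lower sets D such that a and b are linear
  extensions of the subforests off and on D.\<close>
lemma card_splits:
  "card {s \<in> S_F F. length a \<le> length s \<and> standardize (take (length a) s) = a \<and>
       standardize (drop (length a) s) = b}
   = card {D. lower F D \<and> a \<in> S_F (subforest F ({0..<length F} - D)) \<and>
       b \<in> S_F (subforest F D)}"
  (is "card ?L = card ?R")
proof (rule bij_betw_same_card, rule bij_betw_byWitness)
  let ?k = "length a" and ?U = "{0..<length F}"
  define g where "g D = unstd (?U - D) a @ unstd D b" for D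
  have glue: "set (unstd D b) = D \<and> distinct (unstd (?U - D) a) \<and>
      length (unstd (?U - D) a) = length a \<and>
      standardize (unstd (?U - D) a) = a \<and> standardize (unstd D b) = b"
    if "D \<in> ?R" for D
  proof -
    have "finite D" "D \<subseteq> ?U" using that finite_subset unfolding lower_def by auto
    then show ?thesis
      using that set_unstd distinct_unstd standardize_unstd length_unstd
      by (auto simp: S_F_def length_subforest)
  qed
  show "\<forall>s\<in>?L. g (set (drop ?k s)) = s"
  proof
    fix s assume s: "s \<in> ?L"
    then have "distinct s" "set s = ?U" unfolding S_F_def valid_perm_def by auto
    then show "g (set (drop ?k s)) = s"
      using unstd_split[of s ?U ?k] s unfolding g_def by simp
  qed
  show "\<forall>D\<in>?R. set (drop ?k (g D)) = D"
    using glue unfolding g_def by simp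
  show "(\<lambda>s. set (drop ?k s)) ` ?L \<subseteq> ?R"
  proof (rule image_subsetI)
    fix s assume "s \<in> ?L"
    then have s: "s \<in> S_F F" "standardize (take ?k s) = a" "standardize (drop ?k s) = b" by auto
    then show "set (drop ?k s) \<in> ?R"
      using lower_drop[OF vF s(1)] split_in_S_F[OF vF s(1), of ?k] by simp
  qed
  show "g ` ?R \<subseteq> ?L"
  proof (rule image_subsetI)
    fix D assume D: "D \<in> ?R"
    then show "g D \<in> ?L" using glue[OF D] glue_in_S_F[OF vF] unfolding g_def by simp
  qed
qed

lemma card_cuts_lower_sets:
  "card {C. admissible_cut F C \<and> a \<in> S_F (Roo F C) \<and> b \<in> S_F (Lea F C)}
   = card {D. lower F D \<and> a \<in> S_F (subforest F ({0..<length F} - D)) \<and>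
       b \<in> S_F (subforest F D)}"
proof -
  let ?P = "\<lambda>D. a \<in> S_F (subforest F ({0..<length F} - D)) \<and> b \<in> S_F (subforest F D)"
  have img: "lea_set F ` {C. admissible_cut F C} = {D. lower F D}"
    and inj: "inj_on (lea_set F) {C. admissible_cut F C}"
    using bij_cuts_lower_sets[OF vF] unfolding bij_betw_def by auto
  have "{D. lower F D \<and> ?P D} = lea_set F ` {C. admissible_cut F C \<and> ?P (lea_set F C)}"
  proof (intro set_eqI iffI)
    fix D assume "D \<in> {D. lower F D \<and> ?P D}"
    then obtain C where "admissible_cut F C" "D = lea_set F C" "?P D"
      using img by (metis (no_types, lifting) imageE mem_Collect_eq)
    then show "D \<in> lea_set F ` {C. admissible_cut F C \<and> ?P (lea_set F C)}" by blast
  qed (use img in blast)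
  moreover have "inj_on (lea_set F) {C. admissible_cut F C \<and> ?P (lea_set F C)}"
    by (rule inj_on_subset[OF inj]) blast
  ultimately show ?thesis by (simp add: card_image Roo_def Lea_def roo_set_def)
qed

lemma card_deconcatenations:
  "(\<Sum>s\<in>S_F F. card {k. k \<le> length s \<and> standardize (take k s) = p \<and>
       standardize (drop k s) = q})
   = card {C. admissible_cut F C \<and> p \<in> S_F (Roo F C) \<and> q \<in> S_F (Lea F C)}"
proof -
  let ?Q = "\<lambda>s. length p \<le> length s \<and> standardize (take (length p) s) = p \<and>
       standardize (drop (length p) s) = q"
  have "(\<Sum>s\<in>S_F F. card {k. k \<le> length s \<and> standardize (take k s) = p \<and>
       standardize (drop k s) = q}) = (\<Sum>s\<in>S_F F. if ?Q s then 1 else 0)"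
    by (simp only: card_cut_positions)
  also have "\<dots> = (\<Sum>s\<in>{s \<in> S_F F. ?Q s}. 1)"
    by (rule sum.inter_filter[OF finite_S_F, symmetric])
  also have "\<dots> = card {s \<in> S_F F. ?Q s}" by (rule card_eq_sum[symmetric])
  also have "\<dots> = card {C. admissible_cut F C \<and> p \<in> S_F (Roo F C) \<and> q \<in> S_F (Lea F C)}"
    by (simp only: card_splits card_cuts_lower_sets)
  finally show ?thesis .
qed

end

section \<open>Linear extension of maps on bases\<close>

lemma lin_superset:
  assumes "finite A" "supp x \<subseteq> A"
  shows "lin f x c = (\<Sum>a\<in>A. x a * f a c)"
  unfolding lin_def using assms by (intro sum.mono_neutral_left) (auto simp: supp_def)

lemma lin_cong: "(\<And>a. a \<in> supp x \<Longrightarrow> f a = g a) \<Longrightarrow> lin f x = lin g x"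
  unfolding lin_def by simp

lemma supp_basis_vec: "supp (basis_vec w :: 'a \<Rightarrow> 'k::zero_neq_one) = {w}"
  unfolding supp_def basis_vec_def by auto

lemma lin_basis_vec: "lin f (basis_vec w) = f w"
  unfolding lin_def supp_basis_vec by (simp add: basis_vec_def)

lemma supp_lin: "supp (lin f x) \<subseteq> (\<Union>a\<in>supp x. supp (f a))"
proof
  fix c assume "c \<in> supp (lin f x)"
  then obtain a where "a \<in> supp x" "x a * f a c \<noteq> 0"
    unfolding supp_def lin_def by (auto dest: sum.not_neutral_contains_not_neutral)
  then show "c \<in> (\<Union>a\<in>supp x. supp (f a))" unfolding supp_def by auto
qed

lemma finite_supp_lin:
  "finite (supp x) \<Longrightarrow> (\<And>a. a \<in> supp x \<Longrightarrow> finite (supp (f a))) \<Longrightarrow> finite (supp (lin f x))"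
  by (rule finite_subset[OF supp_lin]) auto

lemma lin_lin:
  assumes fin: "finite (supp x)" "\<And>a. a \<in> supp x \<Longrightarrow> finite (supp (f a))"
  shows "lin g (lin f x) = lin (\<lambda>a. lin g (f a)) x"
proof
  fix c
  define B where "B = (\<Union>a\<in>supp x. supp (f a))"
  have B: "finite B" "\<And>a. a \<in> supp x \<Longrightarrow> supp (f a) \<subseteq> B"
    unfolding B_def using fin by auto
  have "lin g (lin f x) c = (\<Sum>b\<in>B. lin f x b * g b c)"
    using B(1) supp_lin[of f x] unfolding B_def by (rule lin_superset)
  also have "\<dots> = (\<Sum>b\<in>B. \<Sum>a\<in>supp x. x a * (f a b * g b c))"
    unfolding lin_def by (simp add: sum_distrib_right mult.assoc)
  also have "\<dots> = (\<Sum>a\<in>supp x. x a * (\<Sum>b\<in>B. f a b * g b c))"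
    by (subst sum.swap) (simp add: sum_distrib_left)
  also have "\<dots> = (\<Sum>a\<in>supp x. x a * lin g (f a) c)"
    by (rule sum.cong[OF refl]) (simp add: lin_superset[OF B(1) B(2)])
  also have "\<dots> = lin (\<lambda>a. lin g (f a)) x c"
    unfolding lin_def[of "\<lambda>a. lin g (f a)"] ..
  finally show "lin g (lin f x) c = lin (\<lambda>a. lin g (f a)) x c" .
qed

lemma lin_swap: "lin (\<lambda>a. lin (h a) y) x = lin (\<lambda>b. lin (\<lambda>a. h a b) x) y"
proof
  fix c
  have "lin (\<lambda>a. lin (h a) y) x c = (\<Sum>a\<in>supp x. \<Sum>b\<in>supp y. x a * (y b * h a b c))"
    unfolding lin_def by (simp add: sum_distrib_left)
  also have "\<dots> = (\<Sum>b\<in>supp y. \<Sum>a\<in>supp x. y b * (x a * h a b c))"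
    by (subst sum.swap) (simp add: mult.left_commute)
  also have "\<dots> = lin (\<lambda>b. lin (\<lambda>a. h a b) x) y c"
    unfolding lin_def by (simp add: sum_distrib_left)
  finally show "lin (\<lambda>a. lin (h a) y) x c = lin (\<lambda>b. lin (\<lambda>a. h a b) x) y c" .
qed

lemma bilin_lin_lin: "bilin m x y = lin (\<lambda>a. lin (m a) y) x"
proof
  fix c
  have "bilin m x y c = (\<Sum>a\<in>supp x. \<Sum>b\<in>supp y. x a * y b * m a b c)"
    unfolding bilin_def by (rule sum.cartesian_product[symmetric])
  then show "bilin m x y c = lin (\<lambda>a. lin (m a) y) x c"
    unfolding lin_def by (simp add: sum_distrib_left mult.assoc)
qed

lemma lin_bilin:
  assumes "finite (supp x)" "finite (supp y)" "\<And>a b. finite (supp (m a b))"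
  shows "lin g (bilin m x y) = lin (\<lambda>a. lin (\<lambda>b. lin g (m a b)) y) x"
proof -
  have "lin g (bilin m x y) = lin (\<lambda>a. lin g (lin (m a) y)) x"
    unfolding bilin_lin_lin by (rule lin_lin) (use assms in \<open>auto intro: finite_supp_lin\<close>)
  also have "\<dots> = lin (\<lambda>a. lin (\<lambda>b. lin g (m a b)) y) x"
    by (rule lin_cong, rule lin_lin) (use assms in auto)
  finally show ?thesis .
qed

lemma bilin_lin:
  assumes "finite (supp x)" "finite (supp y)"
    and "\<And>a. finite (supp (f a))" "\<And>b. finite (supp (g b))"
  shows "bilin M (lin f x) (lin g y) = lin (\<lambda>a. lin (\<lambda>b. bilin M (f a) (g b)) y) x"
proof -
  have "bilin M (lin f x) (lin g y) = lin (\<lambda>a. lin (\<lambda>s. lin (M s) (lin g y)) (f a)) x"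
    unfolding bilin_lin_lin by (rule lin_lin) (use assms in auto)
  also have "\<dots> = lin (\<lambda>a. lin (\<lambda>s. lin (\<lambda>b. lin (M s) (g b)) y) (f a)) x"
    by (rule lin_cong, rule lin_cong, rule lin_lin) (use assms in auto)
  also have "\<dots> = lin (\<lambda>a. lin (\<lambda>b. bilin M (f a) (g b)) y) x"
    unfolding lin_swap[of _ y] bilin_lin_lin ..
  finally show ?thesis .
qed

section \<open>Theta is a morphism of Hopf algebras\<close>

lemma supp_Theta_basis: "supp (Theta_basis F :: perm_word \<Rightarrow> 'k::comm_ring_1) = S_F F"
  unfolding supp_def Theta_basis_def by auto

lemma finite_supp_Theta_basis: "finite (supp (Theta_basis F :: perm_word \<Rightarrow> 'k::comm_ring_1))"
  by (simp add: supp_Theta_basis finite_S_F)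

lemma Theta_basis_forest_prod:
  assumes "valid_forest F" "valid_forest G"
  shows "FQ_mult (Theta_basis F) (Theta_basis G) =
    (Theta_basis (forest_prod F G) :: perm_word \<Rightarrow> 'k::comm_ring_1)"
proof
  fix c
  have "FQ_mult (Theta_basis F) (Theta_basis G) c =
      (\<Sum>s\<in>S_F F. \<Sum>t\<in>S_F G. (FQ_mult_basis s t c :: 'k))"
    unfolding FQ_mult_def bilin_def supp_Theta_basis sum.cartesian_product[symmetric]
    by (simp add: Theta_basis_def)
  also have "\<dots> = of_nat (\<Sum>s\<in>S_F F. \<Sum>t\<in>S_F G.
      card {e. is_shuffle (length s) (length t) e \<and> perm_comp (perm_tensor s t) e = c})"
    unfolding FQ_mult_basis_def by simp
  also have "\<dots> = Theta_basis (forest_prod F G) c"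
    unfolding card_shuffles_forest_prod[OF assms] Theta_basis_def by simp
  finally show "(FQ_mult (Theta_basis F) (Theta_basis G) c :: 'k) =
      Theta_basis (forest_prod F G) c" .
qed

lemma card_fibers:
  assumes "finite S" "finite T" "h ` S \<subseteq> T"
  shows "(\<Sum>y\<in>T. card {x \<in> S. h x = y}) = card S"
  using sum.group[OF assms, of "\<lambda>_. 1"] by (simp only: card_eq_sum)

lemma finite_cuts: "finite {C. admissible_cut F C}"
  by (rule finite_subset[of _ "Pow {0..<length F}"]) (auto simp: admissible_cut_def)

lemma supp_Ho_coprod_basis:
  "supp (Ho_coprod_basis F :: _ \<Rightarrow> 'k::comm_ring_1) \<subseteq>
    (\<lambda>C. (Roo F C, Lea F C)) ` {C. admissible_cut F C}"
proof
  fix y assume y: "y \<in> supp (Ho_coprod_basis F :: _ \<Rightarrow> 'k)"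
  obtain A B where AB: "y = (A, B)" by (cases y)
  have "card {C. admissible_cut F C \<and> Roo F C = A \<and> Lea F C = B} \<noteq> 0"
  proof
    assume "card {C. admissible_cut F C \<and> Roo F C = A \<and> Lea F C = B} = 0"
    then show False using y unfolding supp_def Ho_coprod_basis_def AB by simp
  qed
  then obtain C where "admissible_cut F C" "Roo F C = A" "Lea F C = B"
    by (metis (mono_tags, lifting) card.empty empty_Collect_eq)
  then show "y \<in> (\<lambda>C. (Roo F C, Lea F C)) ` {C. admissible_cut F C}" using AB by blast
qed

lemma finite_supp_Ho_coprod_basis: "finite (supp (Ho_coprod_basis F :: _ \<Rightarrow> 'k::comm_ring_1))"
  using finite_subset[OF supp_Ho_coprod_basis] finite_cuts by blast

lemma Theta_basis_coprod:
  assumes vF: "valid_forest F"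
  shows "FQ_coprod (Theta_basis F) =
    (tensor_map Theta_basis Theta_basis (Ho_coprod_basis F) :: _ \<Rightarrow> 'k::comm_ring_1)"
proof (rule ext, clarify)
  fix p q :: perm_word
  let ?h = "\<lambda>C. (Roo F C, Lea F C)" and ?cuts = "{C. admissible_cut F C}"
  let ?P = "\<lambda>y. p \<in> S_F (fst y) \<and> q \<in> S_F (snd y)"
  have "FQ_coprod (Theta_basis F) (p, q) = (\<Sum>s\<in>S_F F. (FQ_coprod_basis s (p, q) :: 'k))"
    unfolding FQ_coprod_def lin_def supp_Theta_basis by (simp add: Theta_basis_def)
  also have "\<dots> = of_nat (\<Sum>s\<in>S_F F. card {k. k \<le> length s \<and>
      standardize (take k s) = p \<and> standardize (drop k s) = q})"
    unfolding FQ_coprod_basis_def by (simp add: of_nat_sum)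
  also have "\<dots> = of_nat (card {C \<in> ?cuts. ?P (?h C)})"
    using card_deconcatenations[OF vF, of p q] by simp
  also have "\<dots> = of_nat (\<Sum>y\<in>?h ` ?cuts. card {C \<in> {C \<in> ?cuts. ?P (?h C)}. ?h C = y})"
    using finite_cuts by (subst card_fibers) auto
  also have "\<dots> = (\<Sum>y\<in>?h ` ?cuts. of_nat (card {C \<in> ?cuts. ?h C = y}) *
      (if ?P y then 1 else 0 :: 'k))"
    unfolding of_nat_sum
  proof (rule sum.cong[OF refl])
    fix y
    have "{C \<in> {C \<in> ?cuts. ?P (?h C)}. ?h C = y} = (if ?P y then {C \<in> ?cuts. ?h C = y} else {})"
      by auto
    then show "of_nat (card {C \<in> {C \<in> ?cuts. ?P (?h C)}. ?h C = y}) =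
        of_nat (card {C \<in> ?cuts. ?h C = y}) * (if ?P y then 1 else 0 :: 'k)"
      by simp
  qed
  also have "\<dots> = (\<Sum>y\<in>?h ` ?cuts. (Ho_coprod_basis F y :: 'k) *
      (Theta_basis (fst y) p * Theta_basis (snd y) q))"
    by (intro sum.cong refl)
      (auto simp: Ho_coprod_basis_def Theta_basis_def case_prod_unfold prod_eq_iff)
  also have "\<dots> = tensor_map Theta_basis Theta_basis (Ho_coprod_basis F) (p, q)"
    unfolding tensor_map_def
      lin_superset[OF finite_imageI[OF finite_cuts] supp_Ho_coprod_basis]
    by (simp add: case_prod_unfold)
  finally show "(FQ_coprod (Theta_basis F) (p, q) :: 'k) =
      tensor_map Theta_basis Theta_basis (Ho_coprod_basis F) (p, q)" .
qed

lemma Theta_mult: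
  fixes x y :: "oforest \<Rightarrow> 'k::comm_ring_1"
  assumes x: "Ho_elem x" and y: "Ho_elem y"
  shows "Theta (Ho_mult x y) = FQ_mult (Theta x) (Theta y)"
proof -
  have fin: "finite (supp x)" "finite (supp y)" using x y unfolding Ho_elem_def by auto
  have "Theta (Ho_mult x y) = lin (\<lambda>a. lin (\<lambda>b. Theta_basis (forest_prod a b)) y) x"
    unfolding Theta_def Ho_mult_def Ho_mult_basis_def
    by (simp add: lin_bilin fin supp_basis_vec lin_basis_vec)
  also have "\<dots> = lin (\<lambda>a. lin (\<lambda>b. FQ_mult (Theta_basis a) (Theta_basis b)) y) x"
  proof (rule lin_cong, rule lin_cong)
    fix a b assume "a \<in> supp x" "b \<in> supp y"
    then have "valid_forest a" "valid_forest b" using x y unfolding Ho_elem_def by auto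
    then show "Theta_basis (forest_prod a b) = FQ_mult (Theta_basis a) (Theta_basis b)"
      by (simp add: Theta_basis_forest_prod)
  qed
  also have "\<dots> = FQ_mult (Theta x) (Theta y)"
    unfolding Theta_def FQ_mult_def
    by (simp add: bilin_lin fin finite_supp_Theta_basis)
  finally show ?thesis .
qed

lemma Theta_coprod:
  fixes x :: "oforest \<Rightarrow> 'k::comm_ring_1"
  assumes x: "Ho_elem x"
  shows "FQ_coprod (Theta x) = tensor_map Theta_basis Theta_basis (Ho_coprod x)"
proof -
  have fin: "finite (supp x)" using x unfolding Ho_elem_def by auto
  have "FQ_coprod (Theta x) = lin (\<lambda>a. FQ_coprod (Theta_basis a)) x"
    unfolding FQ_coprod_def Theta_def by (simp add: lin_lin fin finite_supp_Theta_basis)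
  also have "\<dots> = lin (\<lambda>a. tensor_map Theta_basis Theta_basis (Ho_coprod_basis a)) x"
    using x unfolding Ho_elem_def by (intro lin_cong) (auto simp: Theta_basis_coprod)
  also have "\<dots> = tensor_map Theta_basis Theta_basis (Ho_coprod x)"
    unfolding tensor_map_def Ho_coprod_def by (simp add: lin_lin fin finite_supp_Ho_coprod_basis)
  finally show ?thesis .
qed

lemma S_F_Nil: "[] \<in> S_F F \<longleftrightarrow> F = []"
  unfolding S_F_def valid_perm_def by auto

lemma Theta_unit: "Theta (Ho_unit :: oforest \<Rightarrow> 'k::comm_ring_1) = FQ_unit"
  unfolding Theta_def Ho_unit_def FQ_unit_def lin_basis_vec
  by (auto simp: Theta_basis_def basis_vec_def S_F_def valid_perm_def)

lemma Theta_counit: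
  fixes x :: "oforest \<Rightarrow> 'k::comm_ring_1"
  assumes x: "Ho_elem x"
  shows "FQ_counit (Theta x) = Ho_counit x"
proof -
  have fin: "finite (insert [] (supp x))" using x unfolding Ho_elem_def by auto
  have "FQ_counit (Theta x) = (\<Sum>a\<in>insert [] (supp x). x a * Theta_basis a [])"
    unfolding FQ_counit_def Theta_def by (rule lin_superset[OF fin]) auto
  also have "\<dots> = (\<Sum>a\<in>insert [] (supp x). if a = [] then x a else 0)"
    unfolding Theta_basis_def S_F_Nil by (intro sum.cong) auto
  finally show ?thesis using fin unfolding Ho_counit_def by simp
qed

lemma Theta_degree:
  fixes x :: "oforest \<Rightarrow> 'k::comm_ring_1"
  assumes "\<forall>F\<in>supp x. length F = n"
  shows "\<forall>s\<in>supp (Theta x). length s = n"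
proof
  fix s assume "s \<in> supp (Theta x)"
  then obtain F where "F \<in> supp x" "s \<in> S_F F"
    using supp_lin[of Theta_basis x] unfolding Theta_def supp_Theta_basis by blast
  then show "length s = n" using assms unfolding S_F_def by auto
qed

theorem Theta_Hopf_morphism_generic: "Theta_Hopf_morphism TYPE('k::comm_ring_1)"
  unfolding Theta_Hopf_morphism_def
  using Theta_mult Theta_unit Theta_coprod Theta_counit Theta_degree by blast

theorem mainTheorem4:
  shows "Theta_Hopf_morphism TYPE(real) \<and> Theta_Hopf_morphism TYPE(complex)"
  by (simp add: Theta_Hopf_morphism_generic)

end
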